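(* Let $m,a,b,n$ be positive integers with $n\ge 3$ and $(3m+1)/2\le a<b\le (5m-1)/3$. Let $A\subset\mathbb N_+$ with $|A|=n-1$, $\min A=a$, $\max A=b$, such that the sums $x_1+\dots+x_h$, over all $h\in\{1,2,3\}$ and all multisets $\{x_1,\dots,x_h\}$ of elements of $A$, are pairwise distinct modulo $m$. Let $S=\langle\{m\}\cup A\rangle_{4m}$ and $P_4=P\cap[4m,5m-1]$. Then the integer interval $4m+\big[\lfloor (m+1)/3\rfloor,\ \lceil (m-1)/2\rceil\big]$ is contained in $P_4$, and $|P_4|\ge m/6$.
   Context: $\mathbb N=\{0,1,2,\dots\}$, $\mathbb N_+=\mathbb N\setminus\{0\}$; $[x,y]=\{z\in\mathbb Z: x\le z\le y\}$, and $t+[x,y]=\{t+z: z\in[x,y]\}$. For a finite set $B$ of positive integers and a positive integer $t$, $\langle B\rangle_t=\big(\sum_{x\in B}\mathbb N x\big)\cup\{z\in\mathbb Z: z\ge t\}$; this is a numerical semigroup. For a numerical semigroup $S$, let $S^*=S\setminus\{0\}$, $D=S^*+S^*$ and $P=S^*\setminus D$ (the primitive elements). *)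

theory Defs
  imports Complex_Main "HOL-Library.Multiset"
begin

definition gen_sg :: "nat set \<Rightarrow> nat \<Rightarrow> nat set" where
  "gen_sg B t = {x. \<exists>f. x = (\<Sum>y\<in>B. f y * y)} \<union> {z. t \<le> z}"

definition nonzero :: "nat set \<Rightarrow> nat set" where
  "nonzero S = S - {0}"

definition decomposables :: "nat set \<Rightarrow> nat set" where
  "decomposables S = {x + y | x y. x \<in> nonzero S \<and> y \<in> nonzero S}"

definition primitives :: "nat set \<Rightarrow> nat set" where
  "primitives S = nonzero S - decomposables S"

end

theory Submission
  imports Defs
begin

text \<open>
  Every generator is at least \<open>m\<close>, so a decomposable element below \<open>4m + m\<close> splits into two
  nonzero elements below \<open>4m\<close>, i.e. into two combinations of the generators; hence every element of
  \<open>[4m, 5m)\<close> outside the monoid generated by \<open>{m} \<union> A\<close> is primitive. An element of that monoid is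
  \<open>km + T\<close> with \<open>T\<close> a sum of \<open>c\<close> elements of \<open>A \<subseteq> [3m/2, 5m/3)\<close>; lying in the window
  \<open>4m + [(m-1)/3, m/2]\<close> forces \<open>2k + 3c \<le> 8\<close> and \<open>3k + 5c \<ge> 13\<close>, with equality in the latter only if
  \<open>c \<le> 1\<close>; no pair \<open>(k, c)\<close> satisfies this. The window has about \<open>m/6\<close> elements.
\<close>

definition nat_combinations :: "nat set \<Rightarrow> nat set" where
  "nat_combinations B = {x. \<exists>f. x = (\<Sum>y\<in>B. f y * y)}"

lemma gen_sg_eq: "gen_sg B t = nat_combinations B \<union> {t..}"
  by (auto simp: gen_sg_def nat_combinations_def)

lemma nat_combinations_add:
  assumes "x \<in> nat_combinations B" "y \<in> nat_combinations B"
  shows "x + y \<in> nat_combinations B"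
proof -
  obtain f g where "x = (\<Sum>z\<in>B. f z * z)" "y = (\<Sum>z\<in>B. g z * z)"
    using assms by (auto simp: nat_combinations_def)
  then have "x + y = (\<Sum>z\<in>B. (f z + g z) * z)"
    by (simp add: sum.distrib distrib_right)
  then show ?thesis by (auto simp: nat_combinations_def)
qed

lemma nat_combinations_nonzero_ge:
  assumes "finite B" "\<forall>y\<in>B. m \<le> y" "x \<in> nat_combinations B" "x \<noteq> 0"
  shows "m \<le> x"
proof -
  obtain f where x: "x = (\<Sum>y\<in>B. f y * y)"
    using assms(3) by (auto simp: nat_combinations_def)
  have "\<exists>y\<in>B. f y * y \<noteq> 0"
    using assms(4) unfolding x by (meson sum.neutral)
  then obtain y where y: "y \<in> B" "f y * y \<noteq> 0" by blast
  have "m \<le> y" using assms(2) y(1) by blast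
  also have "y \<le> f y * y" using y(2) by simp
  also have "f y * y \<le> x" unfolding x by (rule member_le_sum[OF y(1) _ assms(1)]) simp
  finally show ?thesis .
qed

lemma gen_sg_nonzero_ge:
  assumes "finite B" "\<forall>y\<in>B. m \<le> y" "m \<le> t" "x \<in> nonzero (gen_sg B t)"
  shows "m \<le> x"
  using assms nat_combinations_nonzero_ge[OF assms(1,2)]
  by (auto simp: nonzero_def gen_sg_eq)

lemma decomposable_gen_sg_in_combinations:
  assumes "finite B" "\<forall>y\<in>B. m \<le> y" "m \<le> t"
    and "x \<in> decomposables (gen_sg B t)" "x < t + m"
  shows "x \<in> nat_combinations B"
proof -
  obtain u v where uv: "x = u + v" "u \<in> nonzero (gen_sg B t)" "v \<in> nonzero (gen_sg B t)"
    using assms(4) by (auto simp: decomposables_def)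
  have "m \<le> u" "m \<le> v"
    using uv(2,3) gen_sg_nonzero_ge[OF assms(1-3)] by auto
  then have "u < t" "v < t" using uv(1) assms(5) by linarith+
  then have "u \<in> nat_combinations B" "v \<in> nat_combinations B"
    using uv(2,3) by (auto simp: nonzero_def gen_sg_eq)
  then show ?thesis unfolding uv(1) by (rule nat_combinations_add)
qed

lemma primitive_if_not_combination:
  assumes "finite B" "\<forall>y\<in>B. m \<le> y" "m \<le> t"
    and "t \<le> x" "x < t + m" "x \<notin> nat_combinations B"
  shows "x \<in> primitives (gen_sg B t)"
proof -
  have "0 \<in> nat_combinations B"
    by (auto simp: nat_combinations_def intro: exI[of _ "\<lambda>_. 0"])
  then have "x \<in> nonzero (gen_sg B t)"
    using assms(4,6) by (auto simp: nonzero_def gen_sg_eq) (metis gr0I)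
  then show ?thesis
    using decomposable_gen_sg_in_combinations[OF assms(1-3) _ assms(5)] assms(6)
    by (auto simp: primitives_def)
qed

lemma nat_combinations_insert_bounds:
  assumes "finite A" "\<forall>y\<in>A. a \<le> y \<and> y \<le> b" "x \<in> nat_combinations (insert m A)"
  obtains k c where "k * m + c * a \<le> x" "x \<le> k * m + c * b"
proof -
  obtain f where "x = (\<Sum>y\<in>insert m A. f y * y)"
    using assms(3) by (auto simp: nat_combinations_def)
  then have x: "x = f m * m + (\<Sum>y\<in>A - {m}. f y * y)"
    using assms(1) by (simp add: sum.insert_remove)
  have "(\<Sum>y\<in>A - {m}. f y) * a \<le> (\<Sum>y\<in>A - {m}. f y * y)"
    unfolding sum_distrib_right using assms(2) by (intro sum_mono) simp
  moreover have "(\<Sum>y\<in>A - {m}. f y * y) \<le> (\<Sum>y\<in>A - {m}. f y) * b"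
    unfolding sum_distrib_right using assms(2) by (intro sum_mono) simp
  ultimately show ?thesis using that[of "f m" "\<Sum>y\<in>A - {m}. f y"] x by simp
qed

lemma combination_not_in_window:
  fixes m a b L U k c x :: nat
  assumes "2 \<le> m" "3 * m + 1 \<le> 2 * a" "3 * b + 1 \<le> 5 * m" "m \<le> 3 * L + 1" "2 * U \<le> m"
    and "k * m + c * a \<le> x" "x \<le> k * m + c * b"
  shows "x \<notin> {4 * m + L .. 4 * m + U}"
proof
  assume window: "x \<in> {4 * m + L .. 4 * m + U}"
  have "(2 * k + 3 * c) * m + c = 2 * (k * m) + c * (3 * m + 1)" by (simp add: algebra_simps)
  also have "\<dots> \<le> 2 * (k * m + c * a)" using mult_le_mono2[OF assms(2), of c] by simp
  also have "\<dots> \<le> 9 * m" using window assms(5,6) by simp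
  finally have weight_upper: "(2 * k + 3 * c) * m + c \<le> 9 * m" .
  then have "(2 * k + 3 * c) * m \<le> 9 * m" by linarith
  then have "2 * k + 3 * c \<le> 9" using assms(1) by simp
  moreover have "2 * k + 3 * c = 9 \<longrightarrow> c = 0" using weight_upper by auto
  ultimately have upper: "2 * k + 3 * c \<le> 8" by presburger
  have "13 * m + c \<le> 3 * x + 1 + c" using window assms(4) by simp
  also have "\<dots> \<le> 3 * (k * m) + c * (3 * b + 1) + 1" using assms(7) by (simp add: algebra_simps)
  also have "\<dots> \<le> 3 * (k * m) + c * (5 * m) + 1" using mult_le_mono2[OF assms(3), of c] by simp
  also have "\<dots> = (3 * k + 5 * c) * m + 1" by (simp add: algebra_simps)
  finally have lower: "13 * m + c \<le> (3 * k + 5 * c) * m + 1" .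
  have "c \<le> 2" using upper by linarith
  then consider "c = 0" | "c = 1" | "c = 2" by linarith
  then have "3 * k + 5 * c \<le> 12 \<or> (k = 1 \<and> c = 2)" using upper by cases linarith+
  then show False
  proof (elim disjE conjE)
    assume "3 * k + 5 * c \<le> 12"
    then have "(3 * k + 5 * c) * m \<le> 12 * m" by (rule mult_le_mono1)
    then show False using lower assms(1) by linarith
  next
    assume "k = 1" "c = 2"
    then show False using lower by simp
  qed
qed
lemma nat_floor_succ_div_three: "nat \<lfloor>(real m + 1) / 3\<rfloor> = (m + 1) div 3"
  using floor_divide_of_nat_eq[where 'a = real, of "m + 1" 3] by (simp add: add.commute)

lemma nat_ceiling_pred_div_two: "nat \<lceil>(real m - 1) / 2\<rceil> = m div 2"
proof -
  have "m = 2 * (m div 2) + m mod 2" "m mod 2 \<le> 1" by simp_all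
  then have "real m = 2 * real (m div 2) + real (m mod 2)" "real (m mod 2) \<le> 1"
    by (metis of_nat_add of_nat_mult of_nat_numeral) simp
  then have "\<lceil>(real m - 1) / 2\<rceil> = int (m div 2)"
    by (intro ceiling_unique) (simp_all add: field_simps)
  then show ?thesis by simp
qed

theorem mainTheorem8:
  fixes m a b n :: nat and A :: "nat set"
  assumes "m > 0" "a > 0" "b > 0" "n \<ge> 3"
    and "(3 * real m + 1) / 2 \<le> real a" "a < b" "real b \<le> (5 * real m - 1) / 3"
    and "A \<subseteq> {x. x > 0}" "card A = n - 1" "Min A = a" "Max A = b"
    and "\<forall>M1 M2. set_mset M1 \<subseteq> A \<and> size M1 \<in> {1,2,3}
               \<and> set_mset M2 \<subseteq> A \<and> size M2 \<in> {1,2,3} \<and> M1 \<noteq> M2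
               \<longrightarrow> sum_mset M1 mod m \<noteq> sum_mset M2 mod m"
  shows "{4 * m + nat \<lfloor>(real m + 1) / 3\<rfloor> .. 4 * m + nat \<lceil>(real m - 1) / 2\<rceil>}
           \<subseteq> primitives (gen_sg (insert m A) (4 * m)) \<inter> {4 * m .. 5 * m - 1}
         \<and> real (card (primitives (gen_sg (insert m A) (4 * m)) \<inter> {4 * m .. 5 * m - 1}))
             \<ge> real m / 6"
proof -
  define L U where "L = (m + 1) div 3" and "U = m div 2"
  define P4 where "P4 = primitives (gen_sg (insert m A) (4 * m)) \<inter> {4 * m .. 5 * m - 1}"
  have a: "3 * m + 1 \<le> 2 * a" and b: "3 * b + 1 \<le> 5 * m"
    using assms(5,7) by (simp_all add: field_simps flip: of_nat_le_iff)
  then have m: "2 \<le> m" using assms(6) by linarith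
  have L: "m \<le> 3 * L + 1" and U: "2 * U \<le> m" unfolding L_def U_def by linarith+
  have finite_A: "finite A" using assms(4,9) by (intro card_ge_0_finite) simp
  have A_bounds: "\<forall>y\<in>A. a \<le> y \<and> y \<le> b"
    using finite_A assms(10,11) by auto
  have gens_ge: "\<forall>y\<in>insert m A. m \<le> y" using A_bounds a by auto
  have window: "{4 * m + L .. 4 * m + U} \<subseteq> P4"
  proof
    fix x assume x: "x \<in> {4 * m + L .. 4 * m + U}"
    have "x \<notin> nat_combinations (insert m A)"
    proof
      assume "x \<in> nat_combinations (insert m A)"
      then obtain k c where "k * m + c * a \<le> x" "x \<le> k * m + c * b"
        by (rule nat_combinations_insert_bounds[OF finite_A A_bounds])
      then have "x \<notin> {4 * m + L .. 4 * m + U}" by (rule combination_not_in_window[OF m a b L U])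
      with x show False by contradiction
    qed
    then have "x \<in> primitives (gen_sg (insert m A) (4 * m))"
      using x U m finite_A by (intro primitive_if_not_combination[OF _ gens_ge]) auto
    moreover have "x \<in> {4 * m .. 5 * m - 1}" using x U m by auto
    ultimately show "x \<in> P4" unfolding P4_def by blast
  qed
  have "m \<le> 6 * card {4 * m + L .. 4 * m + U}" unfolding L_def U_def by simp
  also have "\<dots> \<le> 6 * card P4" using card_mono[OF _ window] by (simp add: P4_def)
  finally have "real m / 6 \<le> real (card P4)" by linarith
  with window show ?thesis
    unfolding nat_floor_succ_div_three nat_ceiling_pred_div_two L_def U_def P4_def by simp
qed

end
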